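(* For all integers $n\geq 1$ and all real $x\in(0,2\pi/3)$, $$\sum_{k=1}^n (n-k+1)(n-k+2)\,k\sin(kx)>\frac{2}{9}\sin(x)\bigl(1+2\cos(x)\bigr)^2,$$ and the constant $2/9$ is best possible: the inequality $\sum_{k=1}^n (n-k+1)(n-k+2)k\sin(kx)>\lambda\sin(x)(1+2\cos x)^2$ for all $n\ge1$, $x\in(0,2\pi/3)$ fails for every $\lambda>2/9$. *)

theory Defs
  imports Complex_Main
begin

end

(*
  The weighted sum S_n(x) is twice the third iterated partial sum of k sin(kx), so with
  x = 2h and m = 2n + 3 it has the closed form
    8 sin^4 h * S_n(2h) = m sin h (2 cos h + cos (m h)) - 3 cos h sin (m h),
  while 8 sin^4 h times the bound equals (32/9) sin^5 h cos h (4 cos^2 h - 1)^2.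
  If n x <= pi, every term of S_n is nonnegative and the first one, n (n + 1) sin x,
  already exceeds 2 sin x > (2/9) sin x (1 + 2 cos x)^2.  Otherwise the closed form is a
  quadratic form in (cos (m h/2), sin (m h/2)) on the unit circle, and its smallest
  eigenvalue beats the bound unless h lies within 3/m^2 of pi/3.  In that window
  m h is close to m pi/3, which is congruent to pi, -pi/3 or pi/3 modulo 2 pi according
  to n mod 3, and a second-order expansion in pi/3 - h decides each case.
  The constant is optimal: for n = 1 the sum is 2 sin x, and (1 + 2 cos x)^2 tends to 9
  as x tends to 0.
*)

theory Submission
  imports Defs "HOL-Analysis.Analysis"
begin

lemma sum_linear_weight_Suc:
  fixes g :: "nat \<Rightarrow> real"
  shows "(\<Sum>k=1..Suc n. (real (Suc n) - real k + 1) * g k)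
       = (\<Sum>k=1..n. (real n - real k + 1) * g k) + (\<Sum>k=1..Suc n. g k)"
proof -
  have "(\<Sum>k=1..n. (real (Suc n) - real k + 1) * g k)
      = (\<Sum>k=1..n. (real n - real k + 1) * g k + g k)"
    by (rule sum.cong) (simp_all add: algebra_simps)
  then show ?thesis by (simp add: sum.distrib)
qed

lemma sum_quadratic_weight_Suc:
  fixes g :: "nat \<Rightarrow> real"
  shows "(\<Sum>k=1..Suc n. (real (Suc n) - real k + 1) * (real (Suc n) - real k + 2) * g k)
       = (\<Sum>k=1..n. (real n - real k + 1) * (real n - real k + 2) * g k)
         + 2 * (\<Sum>k=1..Suc n. (real (Suc n) - real k + 1) * g k)"
proof -
  have "(\<Sum>k=1..n. (real (Suc n) - real k + 1) * (real (Suc n) - real k + 2) * g k)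
      = (\<Sum>k=1..n. (real n - real k + 1) * (real n - real k + 2) * g k
                      + 2 * ((real (Suc n) - real k + 1) * g k))"
    by (rule sum.cong) (simp_all add: algebra_simps)
  then show ?thesis by (simp add: sum.distrib sum_distrib_left)
qed

lemma sum_k_sin_closed:
  fixes h :: real
  shows "4 * sin h ^ 2 * (\<Sum>k=1..n. real k * sin (real k * (2 * h)))
       = cos h * sin ((2 * real n + 1) * h) - (2 * real n + 1) * sin h * cos ((2 * real n + 1) * h)"
proof (induction n)
  case 0
  then show ?case by simp
next
  case (Suc n)
  define t where "t = (2 * real n + 1) * h"
  have "4 * sin h ^ 2 * (\<Sum>k=1..Suc n. real k * sin (real k * (2 * h)))
      = 4 * sin h ^ 2 * (\<Sum>k=1..n. real k * sin (real k * (2 * h)))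
        + 4 * sin h ^ 2 * (real (Suc n) * sin (real (Suc n) * (2 * h)))"
    by (simp add: distrib_left)
  also have "\<dots> = cos h * sin t - (2 * real n + 1) * sin h * cos t
                   + 4 * sin h ^ 2 * ((real n + 1) * sin (t + h))"
    unfolding Suc.IH t_def by (simp add: algebra_simps)
  also have "\<dots> = cos h * sin (t + 2 * h) - (2 * real n + 3) * sin h * cos (t + 2 * h)"
    unfolding sin_add cos_add sin_double cos_double
    using sin_cos_squared_add[of h] by algebra
  also have "t + 2 * h = (2 * real (Suc n) + 1) * h"
    by (simp add: t_def algebra_simps)
  finally show ?case by simp
qed

lemma sum_linear_k_sin_closed:
  fixes h :: real
  shows "4 * sin h ^ 3 * (\<Sum>k=1..n. (real n - real k + 1) * (real k * sin (real k * (2 * h))))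
       = sin h * (sin (2 * h) - (real n + 1) * sin ((2 * real n + 2) * h))
         + cos h * (cos (2 * h) - cos ((2 * real n + 2) * h))"
proof (induction n)
  case 0
  then show ?case by simp
next
  case (Suc n)
  define t where "t = (2 * real n + 2) * h"
  have "4 * sin h ^ 3 * (\<Sum>k=1..Suc n. (real (Suc n) - real k + 1)
                                         * (real k * sin (real k * (2 * h))))
      = 4 * sin h ^ 3 * (\<Sum>k=1..n. (real n - real k + 1) * (real k * sin (real k * (2 * h))))
        + sin h * (4 * sin h ^ 2 * (\<Sum>k=1..Suc n. real k * sin (real k * (2 * h))))"
    unfolding sum_linear_weight_Suc by (simp add: algebra_simps power3_eq_cube power2_eq_square)
  also have "\<dots> = sin h * (sin (2 * h) - (real n + 1) * sin t) + cos h * (cos (2 * h) - cos t)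
                   + sin h * (cos h * sin (t + h) - (2 * real n + 3) * sin h * cos (t + h))"
    unfolding Suc.IH sum_k_sin_closed t_def by (simp add: algebra_simps)
  also have "\<dots> = sin h * (sin (2 * h) - (real n + 2) * sin (t + 2 * h))
                   + cos h * (cos (2 * h) - cos (t + 2 * h))"
    unfolding sin_add cos_add sin_double cos_double
    using sin_cos_squared_add[of h] by algebra
  also have "t + 2 * h = (2 * real (Suc n) + 2) * h"
    by (simp add: t_def algebra_simps)
  finally show ?case by simp
qed

text \<open>For x = 2h and m = 2n + 3, these are 8 sin^4 h times the sum and times the bound
  of the theorem.\<close>

definition scaled_sum :: "real \<Rightarrow> real \<Rightarrow> real" where
  "scaled_sum m h = m * sin h * (2 * cos h + cos (m * h)) - 3 * cos h * sin (m * h)"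

definition scaled_bound :: "real \<Rightarrow> real" where
  "scaled_bound h = 32/9 * sin h ^ 5 * cos h * (4 * cos h ^ 2 - 1)^2"

lemma sum_quadratic_k_sin_closed:
  fixes h :: real
  shows "8 * sin h ^ 4 * (\<Sum>k=1..n. (real n - real k + 1) * (real n - real k + 2)
                                     * (real k * sin (real k * (2 * h))))
       = scaled_sum (2 * real n + 3) h"
proof (induction n)
  case 0
  have "h - 3 * h = - (2 * h)" by simp
  then have "sin h * cos (3 * h) - cos h * sin (3 * h) = - (2 * sin h * cos h)"
    by (metis sin_diff sin_minus sin_double)
  then show ?case by (simp add: scaled_sum_def algebra_simps)
next
  case (Suc n)
  define t where "t = (2 * real n + 3) * h"
  have "8 * sin h ^ 4 * (\<Sum>k=1..Suc n. (real (Suc n) - real k + 1) * (real (Suc n) - real k + 2)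
                                         * (real k * sin (real k * (2 * h))))
      = 8 * sin h ^ 4 * (\<Sum>k=1..n. (real n - real k + 1) * (real n - real k + 2)
                                      * (real k * sin (real k * (2 * h))))
        + 4 * sin h * (4 * sin h ^ 3 * (\<Sum>k=1..Suc n. (real (Suc n) - real k + 1)
                                                     * (real k * sin (real k * (2 * h)))))"
    unfolding sum_quadratic_weight_Suc by (simp add: algebra_simps power3_eq_cube power4_eq_xxxx)
  also have "\<dots> = (2 * real n + 3) * sin h * (2 * cos h + cos t) - 3 * cos h * sin t
                   + 4 * sin h * (sin h * (sin (2 * h) - (real n + 2) * sin (t + h))
                                  + cos h * (cos (2 * h) - cos (t + h)))"
    unfolding Suc.IH sum_linear_k_sin_closed scaled_sum_def t_def by (simp add: algebra_simps)
  also have "\<dots> = (2 * real n + 5) * sin h * (2 * cos h + cos (t + 2 * h))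
                   - 3 * cos h * sin (t + 2 * h)"
    unfolding sin_add cos_add sin_double cos_double
    using sin_cos_squared_add[of h] by algebra
  also have "t + 2 * h = (2 * real (Suc n) + 3) * h"
    by (simp add: t_def algebra_simps)
  finally show ?case by (simp add: scaled_sum_def)
qed

lemma cos_lower_taylor:
  fixes y :: real
  assumes "0 \<le> y"
  shows "1 - y^2 / 2 \<le> cos y"
proof -
  have "\<And>u. 0 \<le> u \<Longrightarrow> u \<le> y \<Longrightarrow>
      ((\<lambda>y. cos y - 1 + y^2 / 2) has_real_derivative (u - sin u)) (at u)"
    by (auto intro!: derivative_eq_intros simp: power2_eq_square)
  moreover have "\<And>u::real. 0 \<le> u \<Longrightarrow> 0 \<le> u - sin u"
    using sin_x_le_x by simp
  ultimately have "cos 0 - 1 + 0^2 / 2 \<le> cos y - 1 + y^2 / 2"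
    by (intro DERIV_nonneg_imp_nondecreasing[OF assms]) blast
  then show ?thesis by simp
qed

lemma sin_lower_taylor:
  fixes y :: real
  assumes "0 \<le> y"
  shows "y - y^3 / 6 \<le> sin y"
proof -
  have "\<And>u. 0 \<le> u \<Longrightarrow> u \<le> y \<Longrightarrow>
      ((\<lambda>y. sin y - y + y^3 / 6) has_real_derivative (cos u - 1 + u^2 / 2)) (at u)"
    by (auto intro!: derivative_eq_intros simp: power2_eq_square)
  moreover have "\<And>u::real. 0 \<le> u \<Longrightarrow> 0 \<le> cos u - 1 + u^2 / 2"
    using cos_lower_taylor by fastforce
  ultimately have "sin 0 - 0 + 0^3 / 6 \<le> sin y - y + y^3 / 6"
    by (intro DERIV_nonneg_imp_nondecreasing[OF assms]) blast
  then show ?thesis by simp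
qed

lemma cos_upper_taylor:
  fixes y :: real
  assumes "0 \<le> y"
  shows "cos y \<le> 1 - y^2 / 2 + y^4 / 24"
proof -
  have "\<And>u. 0 \<le> u \<Longrightarrow> u \<le> y \<Longrightarrow>
      ((\<lambda>y. 1 - y^2 / 2 + y^4 / 24 - cos y) has_real_derivative (sin u - u + u^3 / 6)) (at u)"
    by (auto intro!: derivative_eq_intros simp: power2_eq_square power3_eq_cube)
  moreover have "\<And>u::real. 0 \<le> u \<Longrightarrow> 0 \<le> sin u - u + u^3 / 6"
    using sin_lower_taylor by fastforce
  ultimately have "1 - 0^2 / 2 + 0^4 / 24 - cos 0 \<le> 1 - y^2 / 2 + y^4 / 24 - cos y"
    by (intro DERIV_nonneg_imp_nondecreasing[OF assms]) blast
  then show ?thesis by simp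
qed

lemma sqrt_3_bounds: "1732 / 1000 \<le> sqrt 3" "sqrt 3 \<le> 17321 / 10000"
  by (rule real_le_rsqrt real_le_lsqrt; simp add: power2_eq_square)+

lemma pi_bounds: "31415 / 10000 \<le> pi" "pi \<le> 31416 / 10000"
  using pi_approx by simp_all

text \<open>For positive trace, the smaller eigenvalue of a symmetric 2x2 form is at least its
  determinant divided by its trace.\<close>

lemma quadratic_form_on_unit_circle:
  fixes a b c p q :: real
  assumes "p^2 + q^2 = 1"
  shows "a * c - b^2 \<le> (a + c) * (a * p^2 - 2 * b * p * q + c * q^2)"
proof -
  have "(a + c) * (a * p^2 - 2 * b * p * q + c * q^2) - (a * c - b^2)
      = (a * p - b * q)^2 + (c * q - b * p)^2"
    using assms by algebra
  then show ?thesis by (smt (verit) zero_le_power2)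
qed

lemma four_cos_sq_minus_one_pi_third_minus:
  fixes e :: real
  shows "4 * cos (pi/3 - e)^2 - 1 = 2 * sin e ^ 2 + 2 * sqrt 3 * (cos e * sin e)"
proof -
  have "cos (pi/3 - e) = cos e / 2 + sqrt 3 / 2 * sin e"
    by (simp add: cos_diff cos_60 sin_60)
  moreover have "sqrt 3 ^ 2 = 3" by simp
  ultimately show ?thesis
    using sin_cos_squared_add[of e] by algebra
qed

lemma min_le_four_cos_sq_minus_one_pi_third_minus:
  fixes e :: real
  assumes e: "0 < e" "e < pi/3"
  shows "min (3 * e) (46/100) \<le> 4 * cos (pi/3 - e)^2 - 1"
proof -
  have S: "0 < sin e" and C: "1/2 \<le> cos e"
    using e cos_monotone_0_pi_le[of e "pi/3"] by (auto intro: sin_gt_zero simp: cos_60)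
  have "2 * sqrt 3 * (cos e * sin e) \<le> 4 * cos (pi/3 - e)^2 - 1"
    unfolding four_cos_sq_minus_one_pi_third_minus by simp
  moreover have "min (3 * e) (46/100) \<le> 2 * sqrt 3 * (cos e * sin e)"
  proof (cases "e \<le> 3/10")
    case True
    have "e^2 \<le> (3/10)^2" using e True by (intro power_mono) auto
    then have "e^2 \<le> 9/100" by (simp add: power2_eq_square)
    moreover have "e^3 \<le> 9/100 * e"
      using calculation e by (simp add: power3_eq_cube power2_eq_square mult_right_mono)
    ultimately have "955/1000 \<le> cos e" and "985/1000 * e \<le> sin e"
      using cos_lower_taylor[of e] sin_lower_taylor[of e] e by linarith+
    then have "955/1000 * (985/1000 * e) \<le> cos e * sin e"
      using e by (intro mult_mono) auto
    then have "1732/1000 * (955/1000 * (985/1000 * e)) \<le> sqrt 3 * (cos e * sin e)"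
      by (rule mult_mono[OF sqrt_3_bounds(1)]) (use e in auto)
    then show ?thesis using e by linarith
  next
    case False
    have "3/10 - (3/10)^3/6 \<le> sin (3/10::real)" by (rule sin_lower_taylor) simp
    also have "\<dots> \<le> sin e" using False e pi_bounds by (intro sin_monotone_2pi_le) auto
    finally have "1/2 * (2955/10000) \<le> cos e * sin e"
      using C by (intro mult_mono) (auto simp: power3_eq_cube)
    then have "1732/1000 * (1/2 * (2955/10000)) \<le> sqrt 3 * (cos e * sin e)"
      by (rule mult_mono[OF sqrt_3_bounds(1)]) auto
    then show ?thesis by linarith
  qed
  ultimately show ?thesis by linarith
qed

lemma two_n_plus_3_sin_ge:
  fixes n :: nat and h :: real
  assumes n: "2 \<le> n" and h: "h \<le> pi/2" and nh: "pi < 2 * real n * h"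
  shows "28/10 \<le> (2 * real n + 3) * sin h"
proof -
  define y where "y = pi / (2 * real n)"
  have ny: "2 * real n * y = pi" using n by (simp add: y_def)
  have y: "0 < y" "y < h" "y \<le> pi/4"
    using n nh ny by (auto simp: y_def field_simps mult_less_cancel_left_pos)
  have "pi * (pi/4)^2 \<le> 31416/10000 * (31416/10000/4)^2"
    using pi_bounds by (intro mult_mono power_mono) auto
  then have "28/10 \<le> pi - pi * (pi/4)^2 / 6"
    using pi_bounds by (simp add: power2_eq_square)
  also have "\<dots> \<le> pi - pi * y^2 / 6"
    using y by (simp add: mult_left_mono power_mono)
  also have "\<dots> = 2 * real n * (y - y^3/6)"
    using ny by (simp add: power3_eq_cube power2_eq_square algebra_simps)
  also have "\<dots> \<le> 2 * real n * sin h"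
  proof (intro mult_left_mono)
    have "y - y^3/6 \<le> sin y" using y by (intro sin_lower_taylor) simp
    also have "\<dots> \<le> sin h" using y h by (intro sin_monotone_2pi_le) auto
    finally show "y - y^3/6 \<le> sin h" .
  qed simp
  also have "\<dots> \<le> (2 * real n + 3) * sin h"
    using y h pi_bounds sin_ge_zero[of h] by (simp add: algebra_simps)
  finally show ?thesis .
qed

lemma cube_times_one_minus_le:
  fixes w :: real
  assumes "0 \<le> w" "w \<le> 3/4"
  shows "w^3 * (1 - w) * (3 - 4 * w)^2 \<le> 9/64 * (w * (3 - 4 * w))"
proof -
  have "w * (3 - 4 * w) \<le> 9/16"
    using zero_le_power2[of "2 * w - 3/4"] by (simp add: power2_eq_square algebra_simps)
  moreover have "w * (1 - w) \<le> 1/4"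
    using zero_le_power2[of "w - 1/2"] by (simp add: power2_eq_square algebra_simps)
  ultimately have "(w * (3 - 4 * w)) * (w * (1 - w)) \<le> 9/16 * (1/4)"
    using assms by (intro mult_mono) auto
  then have "(w * (3 - 4 * w)) * ((w * (3 - 4 * w)) * (w * (1 - w)))
      \<le> (w * (3 - 4 * w)) * (9/16 * (1/4))"
    using assms by (intro mult_left_mono) auto
  then show ?thesis by (simp add: power2_eq_square power3_eq_cube algebra_simps)
qed

lemma far_polynomial_inequality:
  fixes m w :: real
  assumes m: "7 \<le> m" and w: "0 < w" "w < 3/4" and mw: "784/100 \<le> m^2 * w"
    and large_w: "71/100 \<le> w \<Longrightarrow> 9 \<le> m^2 * (3 - 4 * w)"
  shows "128/9 * m * w^3 * (1 - w) * (3 - 4 * w)^2 < m^2 * w * (3 - 4 * w) - 9 * (1 - w)"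
proof -
  define u where "u = 3 - 4 * w"
  have u: "0 < u" using w by (simp add: u_def)
  have "w^3 * (1 - w) * u^2 \<le> 9/64 * (w * u)"
    using cube_times_one_minus_le[of w] w by (simp add: u_def)
  then have "128/9 * m * (w^3 * (1 - w) * u^2) \<le> 128/9 * m * (9/64 * (w * u))"
    using m by (intro mult_left_mono) auto
  then have "128/9 * m * w^3 * (1 - w) * u^2 \<le> 128/9 * m * (9/64 * (w * u))"
    by (simp only: mult.assoc)
  also have "\<dots> \<le> 2/7 * (m * (m * w * u))"
    using m w u by (simp add: mult_right_mono)
  finally have lhs: "128/9 * m * w^3 * (1 - w) * u^2 \<le> 2/7 * (m^2 * w * u)"
    by (simp add: power2_eq_square algebra_simps)
  have wu: "w * u = 3 * w - 4 * w^2" by (simp add: u_def power2_eq_square algebra_simps)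
  have "9 * (1 - w) < 71/100 * (m^2 * (w * u))"
  proof (cases "w \<le> 55/100")
    case True
    have "784/100 * u \<le> m^2 * (w * u)" using mult_right_mono[OF mw] u by (simp add: mult.assoc)
    then show ?thesis using True u_def by argo
  next
    case False
    show ?thesis
    proof (cases "w \<le> 71/100")
      case True
      have "7^2 \<le> m^2" using m by (intro power_mono) auto
      then have "49 * (w * u) \<le> m^2 * (w * u)"
        using w u by (intro mult_right_mono) auto
      moreover have "0 \<le> (w - 55/100) * (71/100 - w)"
        using True False by (intro mult_nonneg_nonneg) auto
      moreover have "(w - 55/100) * (71/100 - w) = 126/100 * w - w^2 - 3905/10000"
        by (simp add: power2_eq_square field_simps)
      ultimately show ?thesis using wu True by argo
    next
      case False
      then have "9 * w \<le> m^2 * u * w" using mult_right_mono[OF large_w] w by (simp add: u_def)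
      then have "9 * w \<le> m^2 * (w * u)" by (simp add: ac_simps)
      then show ?thesis using False by argo
    qed
  qed
  moreover have "m^2 * (w * u) = m^2 * w * u" by (simp only: mult.assoc)
  ultimately show ?thesis using lhs w unfolding u_def[symmetric] by argo
qed

lemma scaled_sum_quadratic_form_bound:
  fixes m h :: real
  shows "m^2 * sin h ^ 2 * (4 * cos h ^ 2 - 1) - 9 * cos h ^ 2
       \<le> 4 * (m * sin h * cos h) * scaled_sum m h"
proof -
  define s c p q
    where "s = sin h" and "c = cos h" and "p = cos (m * h / 2)" and "q = sin (m * h / 2)"
  have pq: "p^2 + q^2 = 1" by (simp add: p_def q_def)
  have "cos (m * h) = p^2 - q^2" "sin (m * h) = 2 * p * q"
    using cos_double[of "m * h / 2"] sin_double[of "m * h / 2"] by (simp_all add: p_def q_def)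
  then have F: "scaled_sum m h
      = (m * s * (2 * c + 1)) * p^2 - 2 * (3 * c) * p * q + (m * s * (2 * c - 1)) * q^2"
    using pq unfolding scaled_sum_def s_def c_def by algebra
  have "m^2 * s^2 * (4 * c^2 - 1) - 9 * c^2
      = (m * s * (2 * c + 1)) * (m * s * (2 * c - 1)) - (3 * c)^2"
    by algebra
  also have "\<dots> \<le> (m * s * (2 * c + 1) + m * s * (2 * c - 1)) * scaled_sum m h"
    unfolding F by (rule quadratic_form_on_unit_circle[OF pq])
  also have "\<dots> = 4 * (m * s * c) * scaled_sum m h"
    by algebra
  finally show ?thesis by (simp add: s_def c_def)
qed

lemma key_inequality_far:
  fixes m h :: real
  assumes m: "7 \<le> m" and h: "0 < h" "h < pi/3" and ms: "28/10 \<le> m * sin h"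
    and far: "3 \<le> m^2 * (pi/3 - h)"
  shows "scaled_bound h < scaled_sum m h"
proof -
  define w where "w = sin h ^ 2"
  have s: "0 < sin h" using h pi_bounds by (simp add: sin_gt_zero)
  have c: "1/2 < cos h" using h cos_monotone_0_pi[of h "pi/3"] by (simp add: cos_60)
  have cw: "cos h ^ 2 = 1 - w" by (simp add: w_def cos_squared_eq)
  have "1/2 * (1/2) < cos h * cos h" using mult_strict_mono[OF c c] c by simp
  then have w: "0 < w" "w < 3/4"
    using s cw by (auto simp: w_def power2_eq_square)
  have "28/10 * (28/10) \<le> (m * sin h) * (m * sin h)"
    using ms by (intro mult_mono) auto
  then have mw: "784/100 \<le> m^2 * w"
    by (simp add: w_def power2_eq_square algebra_simps)
  have large_w: "9 \<le> m^2 * (3 - 4 * w)" if "71/100 \<le> w"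
  proof -
    have "min (3 * (pi/3 - h)) (46/100) \<le> 3 - 4 * w"
      using min_le_four_cos_sq_minus_one_pi_third_minus[of "pi/3 - h"] h cw by simp
    then have "3 * (pi/3 - h) \<le> 3 - 4 * w" using that by linarith
    then have "m^2 * (3 * (pi/3 - h)) \<le> m^2 * (3 - 4 * w)"
      by (rule mult_left_mono) simp
    moreover have "m^2 * (3 * (pi/3 - h)) = 3 * (m^2 * (pi/3 - h))"
      by (simp only: mult.left_commute)
    ultimately show ?thesis using far by linarith
  qed
  have "4 * (m * sin h * cos h) * scaled_bound h
      = 128/9 * m * (sin h ^ 2)^3 * cos h ^ 2 * (4 * cos h ^ 2 - 1)^2"
    unfolding scaled_bound_def by algebra
  also have "\<dots> = 128/9 * m * w^3 * (1 - w) * (3 - 4 * w)^2"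
    unfolding cw by (simp add: w_def)
  also have "\<dots> < m^2 * w * (3 - 4 * w) - 9 * (1 - w)"
    using far_polynomial_inequality[OF m w mw large_w] .
  also have "\<dots> = m^2 * sin h ^ 2 * (4 * cos h ^ 2 - 1) - 9 * cos h ^ 2"
    unfolding cw w_def by algebra
  also have "\<dots> \<le> 4 * (m * sin h * cos h) * scaled_sum m h"
    by (rule scaled_sum_quadratic_form_bound)
  finally show ?thesis
    by (rule mult_left_less_imp_less) (use m s c in simp)
qed

lemma near_pi_third_bounds:
  fixes e :: real
  assumes e: "0 < e" "e \<le> 3/49"
  shows "83/100 \<le> sin (pi/3 - e)" and "0 < cos (pi/3 - e)" and "cos (pi/3 - e) \<le> 56/100"
    and "0 < 4 * cos (pi/3 - e)^2 - 1" and "4 * cos (pi/3 - e)^2 - 1 \<le> 36/10 * e"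
proof -
  have S: "0 < sin e" "sin e \<le> e"
    using e pi_bounds by (auto intro: sin_gt_zero sin_x_le_x)
  have "e^2 \<le> (3/49)^2" using e by (intro power_mono) auto
  then have C: "998/1000 \<le> cos e" "cos e \<le> 1"
    using cos_lower_taylor[of e] e by (auto simp: power2_eq_square)
  have sin_eq: "sin (pi/3 - e) = sqrt 3 / 2 * cos e - sin e / 2"
    by (simp add: sin_diff cos_60 sin_60)
  have cos_eq: "cos (pi/3 - e) = cos e / 2 + sqrt 3 / 2 * sin e"
    by (simp add: cos_diff cos_60 sin_60)
  have "1732/1000 * (998/1000) \<le> sqrt 3 * cos e"
    using sqrt_3_bounds C by (intro mult_mono) auto
  then show "83/100 \<le> sin (pi/3 - e)" using S e unfolding sin_eq by linarith
  have "sqrt 3 * sin e \<le> 17321/10000 * (3/49)"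
    using sqrt_3_bounds S e by (intro mult_mono) auto
  then show "cos (pi/3 - e) \<le> 56/100" using C unfolding cos_eq by linarith
  show "0 < cos (pi/3 - e)" using S C unfolding cos_eq by (intro add_pos_nonneg) auto
  show "0 < 4 * cos (pi/3 - e)^2 - 1"
    unfolding four_cos_sq_minus_one_pi_third_minus using S C by (simp add: add_pos_nonneg)
  have "sin e ^ 2 \<le> 3/49 * e"
    using S e mult_mono[of "sin e" e "sin e" "3/49"] by (simp add: power2_eq_square)
  moreover have "sqrt 3 * (cos e * sin e) \<le> 17321/10000 * e"
    using sqrt_3_bounds S C mult_mono[of "cos e" 1 "sin e" e] by (intro mult_mono) auto
  ultimately show "4 * cos (pi/3 - e)^2 - 1 \<le> 36/10 * e"
    unfolding four_cos_sq_minus_one_pi_third_minus using e by linarith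
qed

lemma sin_two_cos_minus_one_near_pi_third:
  fixes e :: real
  assumes e: "0 < e" "e \<le> 3/49"
  shows "- (395/100) * e^2 \<le> sin (pi/3 - e) * (2 * cos (pi/3 - e) - 1) - 3 * cos (pi/3 - e) * e"
proof -
  define S C where "S = sin e" and "C = cos e"
  have S: "0 < S" "S \<le> e" "e - e^3/6 \<le> S"
    using e pi_bounds sin_lower_taylor[of e] by (auto intro: sin_gt_zero sin_x_le_x simp: S_def)
  have C: "1 - e^2/2 \<le> C" "C \<le> 1"
    using cos_lower_taylor[of e] e by (auto simp: C_def)
  have "4 * (sin (pi/3 - e) * (2 * cos (pi/3 - e) - 1) - 3 * cos (pi/3 - e) * e)
      = 2 * (sqrt 3 * (2 * C^2 - 1 - C)) + 4 * (C * S) + 2 * S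
        - 6 * (C * e) - 6 * (sqrt 3 * (S * e))"
  proof -
    have "sin (pi/3 - e) = sqrt 3 / 2 * C - S / 2" "cos (pi/3 - e) = C / 2 + sqrt 3 / 2 * S"
      by (simp_all add: sin_diff cos_diff cos_60 sin_60 S_def C_def)
    moreover have "sqrt 3 ^ 2 = 3" by simp
    ultimately show ?thesis using sin_cos_squared_add[of e] unfolding S_def C_def by algebra
  qed
  \<comment> \<open>The terms of first order in e cancel between 2 S + 4 C S and 6 C e.\<close>
  moreover have "- (17321/10000 * (3/2 * e^2)) \<le> sqrt 3 * (2 * C^2 - 1 - C)"
  proof -
    have "2 * C^2 - 1 - C = 3 * (C - 1) + 2 * (C - 1)^2"
      by (simp add: power2_eq_square algebra_simps)
    then have "- (3/2 * e^2) \<le> 2 * C^2 - 1 - C" using C zero_le_power2[of "C - 1"] by argo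
    then have "sqrt 3 * (- (3/2 * e^2)) \<le> sqrt 3 * (2 * C^2 - 1 - C)"
      by (rule mult_left_mono) simp
    moreover have "sqrt 3 * (3/2 * e^2) \<le> 17321/10000 * (3/2 * e^2)"
      using sqrt_3_bounds by (intro mult_right_mono) auto
    ultimately show ?thesis by simp
  qed
  moreover have "S - e^3/2 \<le> C * S"
  proof -
    have "(1 - C) * S \<le> e^2/2 * e" using C S by (intro mult_mono) auto
    then show ?thesis by (simp add: power3_eq_cube power2_eq_square algebra_simps)
  qed
  moreover have "C * e \<le> e" using C e by (simp add: mult_left_le_one_le)
  moreover have "sqrt 3 * (S * e) \<le> 17321/10000 * e^2"
    using sqrt_3_bounds S e by (intro mult_mono) (auto simp: power2_eq_square mult_right_mono)
  moreover have "e^3 \<le> 3/49 * e^2"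
    using e by (simp add: power3_eq_cube power2_eq_square mult_right_mono)
  ultimately show ?thesis using S by argo
qed

lemma scaled_bound_near_pi_third:
  fixes e :: real
  assumes e: "0 < e" "e \<le> 3/49"
  shows "scaled_bound (pi/3 - e) \<le> 4608/100 * cos (pi/3 - e) * e^2"
proof -
  note bounds = near_pi_third_bounds[OF e]
  have "sin (pi/3 - e) ^ 5 \<le> 1" using bounds by (simp add: power_le_one)
  then have "scaled_bound (pi/3 - e) \<le> 32/9 * cos (pi/3 - e) * (4 * cos (pi/3 - e) ^ 2 - 1)^2"
    using bounds unfolding scaled_bound_def by (simp add: mult_left_le algebra_simps)
  also have "\<dots> \<le> 32/9 * cos (pi/3 - e) * (36/10 * e)^2"
    using bounds by (intro mult_left_mono power_mono) auto
  finally show ?thesis by (simp add: power2_eq_square mult_ac)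
qed

lemma near_offset_bounds:
  fixes m d :: real
  assumes m: "7 \<le> m" and d: "0 < d" and near: "m^2 * d < 3"
  shows "d \<le> 3/49" and "m * d \<le> 3 / m"
proof -
  have "49 * d \<le> m^2 * d" using m d power_mono[of 7 m 2] by (intro mult_right_mono) auto
  then show "d \<le> 3/49" using near by simp
  show "m * d \<le> 3 / m" using m near by (simp add: field_simps power2_eq_square)
qed

lemma one_minus_cos_ge:
  fixes a :: real
  assumes a: "0 \<le> a" "a \<le> 1/3"
  shows "49/100 * a^2 \<le> 1 - cos a"
proof -
  have "a^2 * a^2 \<le> a^2 * (1/3)^2" using a by (intro mult_left_mono power_mono) auto
  moreover have "a^4 = a^2 * a^2" "a^2 * (1/3)^2 = a^2 / 9"
    by (simp_all add: power4_eq_xxxx power2_eq_square)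
  ultimately show ?thesis using cos_upper_taylor[of a] a zero_le_power2[of a] by linarith
qed

lemma key_inequality_near_cos_nonneg:
  fixes m h :: real
  assumes m: "7 \<le> m" and h: "h < pi/3" and near: "m^2 * (pi/3 - h) < 3"
    and cos_nonneg: "0 \<le> cos (m * h)"
  shows "scaled_bound h < scaled_sum m h"
proof -
  define e where "e = pi/3 - h"
  have e: "0 < e" "e \<le> 3/49" using near_offset_bounds(1)[OF m _ near] h by (auto simp: e_def)
  have h_eq: "h = pi/3 - e" by (simp add: e_def)
  note bounds = near_pi_third_bounds[OF e, folded h_eq]
  have "scaled_bound h \<le> 4608/100 * cos h * e^2"
    using scaled_bound_near_pi_third[OF e] by (simp add: h_eq)
  also have "\<dots> \<le> 4608/100 * cos h * (3/49)^2"
    using bounds e by (intro mult_left_mono power_mono) auto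
  also have "\<dots> < 23/10 * cos h" using bounds by (simp add: power2_eq_square)
  also have "\<dots> \<le> 2 * (m * sin h) * cos h - 3 * cos h"
  proof -
    have "7 * (83/100) \<le> m * sin h" using m bounds by (intro mult_mono) auto
    then show ?thesis using bounds mult_right_mono[of "7 * (83/100)" "m * sin h" "cos h"] by simp
  qed
  also have "\<dots> \<le> scaled_sum m h"
  proof -
    have "0 \<le> m * sin h * cos (m * h)" using m bounds cos_nonneg by simp
    moreover have "cos h * sin (m * h) \<le> cos h" using bounds by (simp add: mult_left_le)
    ultimately show ?thesis by (simp add: scaled_sum_def algebra_simps)
  qed
  finally show ?thesis .
qed

lemma key_inequality_near_odd_multiple:
  fixes m h :: real
  assumes m: "9 \<le> m" and h: "h < pi/3" and near: "m^2 * (pi/3 - h) < 3"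
    and cos_eq: "cos (m * h) = - cos (m * (pi/3 - h))"
    and sin_eq: "sin (m * h) = sin (m * (pi/3 - h))"
  shows "scaled_bound h < scaled_sum m h"
proof -
  define e a where "e = pi/3 - h" and "a = m * (pi/3 - h)"
  have m7: "7 \<le> m" using m by simp
  have e: "0 < e" "e \<le> 3/49" using near_offset_bounds(1)[OF m7 _ near] h by (auto simp: e_def)
  have h_eq: "h = pi/3 - e" by (simp add: e_def)
  note bounds = near_pi_third_bounds[OF e, folded h_eq]
  have "a \<le> 3 / m" using near_offset_bounds(2)[OF m7 _ near] e by (simp add: a_def e_def)
  also have "\<dots> \<le> 3 / 9" using m by (intro divide_left_mono) auto
  finally have a: "0 < a" "a \<le> 1/3" using m e by (simp_all add: a_def e_def)
  have "49/100 * a^2 \<le> 1 - cos a" using one_minus_cos_ge a by simp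
  then have "(m * sin h) * (49/100 * a^2) \<le> (m * sin h) * (1 - cos a)"
    using m bounds by (intro mult_left_mono) auto
  moreover have "(m * sin h) * (49/100 * a^2) = 49/100 * ((m^2 * sin h) * (m * e^2))"
    by (simp add: a_def e_def power2_eq_square)
  moreover have "81 * (83/100) * (m * e^2) \<le> (m^2 * sin h) * (m * e^2)"
    using m bounds power_mono[of 9 m 2] by (intro mult_right_mono mult_mono) auto
  moreover have "- (395/100) * (m * e^2) \<le> m * (sin h * (2 * cos h - 1) - 3 * cos h * e)"
    using mult_left_mono[OF sin_two_cos_minus_one_near_pi_third[OF e], of m] m
    by (simp add: h_eq)
  moreover have "cos h * sin a \<le> cos h * a"
    using a bounds sin_x_le_x[of a] by (intro mult_left_mono) auto
  moreover have "scaled_sum m h = m * (sin h * (2 * cos h - 1) - 3 * cos h * e)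
      + (m * sin h) * (1 - cos a) + 3 * (cos h * a) - 3 * (cos h * sin a)"
  proof -
    have "a = m * e" by (simp add: a_def e_def)
    then show ?thesis
      unfolding scaled_sum_def cos_eq sin_eq a_def[symmetric] by (simp add: algebra_simps)
  qed
  moreover have "scaled_bound h \<le> 4608/100 * (cos h * e^2)"
    using scaled_bound_near_pi_third[OF e] by (simp add: h_eq)
  moreover have "9 * e^2 \<le> m * e^2" using m by (intro mult_right_mono) auto
  moreover have "cos h * e^2 \<le> 56/100 * e^2" using bounds by (intro mult_right_mono) auto
  moreover have "0 < e^2" using e by simp
  ultimately show ?thesis by argo
qed

lemma sin_cos_add_2pi_multiple:
  fixes x :: real
  shows "sin (x + 2 * pi * real k) = sin x" and "cos (x + 2 * pi * real k) = cos x"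
  using sin_cos_eq_iff[of "x + 2 * pi * real k" x] by (metis of_int_of_nat_eq)+

lemma key_inequality_near:
  fixes n :: nat and h :: real
  assumes n: "2 \<le> n" and h: "h < pi/3" and near: "(2 * real n + 3)^2 * (pi/3 - h) < 3"
  shows "scaled_bound h < scaled_sum (2 * real n + 3) h"
proof -
  define m a where "m = 2 * real n + 3" and "a = (2 * real n + 3) * (pi/3 - h)"
  have m: "7 \<le> m" using n by (simp add: m_def)
  have near_m: "m^2 * (pi/3 - h) < 3" using near by (simp add: m_def)
  have "a \<le> 3 / m" using near_offset_bounds(2)[OF m _ near_m] h by (simp add: a_def m_def)
  also have "\<dots> \<le> 3 / 7" using m by (intro divide_left_mono) auto
  finally have a: "0 < a" "a \<le> 3/7" using h by (simp_all add: a_def)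
  have mh: "m * h = (2 * real n + 3) * pi / 3 - a" by (simp add: m_def a_def algebra_simps)
  obtain j where j: "n = 3 * j + n mod 3" by (metis div_mod_decomp mult.commute)
  consider "n mod 3 = 0" | "n mod 3 = 1" | "n mod 3 = 2" by arith
  then show ?thesis
  proof cases
    case 1
    then have "n = 3 * j" using j by simp
    then have "9 \<le> m" and "m * h = (pi - a) + 2 * pi * real j"
      using n unfolding mh by (simp_all add: m_def field_simps)
    moreover from this(2) have "sin (m * h) = sin a" "cos (m * h) = - cos a"
      by (simp_all add: sin_cos_add_2pi_multiple)
    ultimately show ?thesis
      using key_inequality_near_odd_multiple[OF _ h near_m] by (simp add: a_def m_def)
  next
    case 2
    then have "real n = 3 * real j + 1"
      using j by (metis of_nat_add of_nat_mult of_nat_numeral of_nat_1)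
    then have "m * h = - (pi/3 + a) + 2 * pi * real (j + 1)"
      unfolding mh by (simp add: field_simps)
    then have "cos (m * h) = cos (pi/3 + a)"
      by (simp only: sin_cos_add_2pi_multiple cos_minus)
    then have "0 \<le> cos (m * h)" using a pi_bounds by (simp add: cos_ge_zero)
    then show ?thesis
      using key_inequality_near_cos_nonneg[OF m h near_m] by (simp add: m_def)
  next
    case 3
    then have "real n = 3 * real j + 2" using j by (metis of_nat_add of_nat_mult of_nat_numeral)
    then have "m * h = (pi/3 - a) + 2 * pi * real (j + 1)"
      unfolding mh by (simp add: field_simps)
    then have "cos (m * h) = cos (pi/3 - a)"
      by (simp only: sin_cos_add_2pi_multiple)
    then have "0 \<le> cos (m * h)" using a pi_bounds by (simp add: cos_ge_zero)
    then show ?thesis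
      using key_inequality_near_cos_nonneg[OF m h near_m] by (simp add: m_def)
  qed
qed

lemma key_inequality:
  fixes n :: nat and h :: real
  assumes n: "2 \<le> n" and h: "0 < h" "h < pi/3" and nh: "pi < 2 * real n * h"
  shows "scaled_bound h < scaled_sum (2 * real n + 3) h"
proof (cases "3 \<le> (2 * real n + 3)^2 * (pi/3 - h)")
  case True
  moreover have "28/10 \<le> (2 * real n + 3) * sin h"
    using two_n_plus_3_sin_ge[OF n _ nh] h pi_bounds by simp
  ultimately show ?thesis
    using key_inequality_far[of "2 * real n + 3" h] n h by simp
next
  case False
  then show ?thesis using key_inequality_near[OF n h(2)] by simp
qed

lemma sum_of_nat_weights:
  fixes f :: "nat \<Rightarrow> real"
  shows "(\<Sum>k=1..n. real ((n - k + 1) * (n - k + 2) * k) * f k)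
       = (\<Sum>k=1..n. (real n - real k + 1) * (real n - real k + 2) * (real k * f k))"
proof (rule sum.cong)
  fix k assume "k \<in> {1..n}"
  then have "real ((n - k + 1) * (n - k + 2) * k)
      = (real n - real k + 1) * (real n - real k + 2) * real k"
    by (simp only: of_nat_mult of_nat_add of_nat_1 of_nat_numeral of_nat_diff atLeastAtMost_iff)
  then show "real ((n - k + 1) * (n - k + 2) * k) * f k
      = (real n - real k + 1) * (real n - real k + 2) * (real k * f k)"
    by simp
qed simp

lemma bound_lt_two_sin:
  fixes x :: real
  assumes x: "0 < x" "x < 2 * pi / 3"
  shows "2/9 * sin x * (1 + 2 * cos x)^2 < 2 * sin x"
proof -
  have "cos x < 1" "- 1/2 < cos x"
    using cos_monotone_0_pi[of 0 x] cos_monotone_0_pi[of x "2 * pi / 3"] x pi_bounds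
    by (simp_all add: cos_120)
  then have "(1 + 2 * cos x)^2 < 3^2" by (intro power_strict_mono) auto
  moreover have "0 < sin x" using x pi_bounds by (intro sin_gt_zero) auto
  ultimately show ?thesis by simp
qed

lemma weighted_sine_sum_gt:
  fixes n :: nat and x :: real
  assumes n: "1 \<le> n" and x: "0 < x" "x < 2 * pi / 3"
  shows "2/9 * sin x * (1 + 2 * cos x)^2
       < (\<Sum>k=1..n. (real n - real k + 1) * (real n - real k + 2) * (real k * sin (real k * x)))"
proof (cases "real n * x \<le> pi")
  case True
  have sin_x: "0 < sin x" using x pi_bounds by (intro sin_gt_zero) auto
  have "2/9 * sin x * (1 + 2 * cos x)^2 < 2 * sin x" by (rule bound_lt_two_sin[OF x])
  also have "\<dots> \<le> real n * (real n + 1) * sin x"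
    using n sin_x mult_mono[of 1 "real n" 2 "real n + 1"] by (intro mult_right_mono) auto
  also have "\<dots> = (real n - real 1 + 1) * (real n - real 1 + 2) * (real 1 * sin (real 1 * x))"
    by simp
  also have "\<dots> \<le> (\<Sum>k=1..n. (real n - real k + 1) * (real n - real k + 2)
                                  * (real k * sin (real k * x)))"
  proof (rule member_le_sum)
    fix k assume k: "k \<in> {1..n} - {1}"
    then have "real k * x \<le> real n * x" using x by (intro mult_right_mono) auto
    then have "real k * x \<le> pi" using True by linarith
    then have "0 \<le> sin (real k * x)" using sin_ge_zero[of "real k * x"] x by simp
    then show "0 \<le> (real n - real k + 1) * (real n - real k + 2) * (real k * sin (real k * x))"
      using k by simp
  qed (use n in auto)
  finally show ?thesis .
next
  case False
  define h where "h = x / 2"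
  have n2: "2 \<le> n"
    using False x pi_bounds n by (cases "n = 1") auto
  have h: "0 < h" "h < pi/3" "pi < 2 * real n * h" using x False by (simp_all add: h_def)
  have x_eq: "x = 2 * h" by (simp add: h_def)
  have "8 * sin h ^ 4 * (2/9 * sin x * (1 + 2 * cos x)^2) = scaled_bound h"
    unfolding scaled_bound_def x_eq sin_double cos_double_cos by algebra
  also have "\<dots> < scaled_sum (2 * real n + 3) h"
    by (rule key_inequality[OF n2 h])
  also have "\<dots> = 8 * sin h ^ 4 * (\<Sum>k=1..n. (real n - real k + 1) * (real n - real k + 2)
                                              * (real k * sin (real k * x)))"
    unfolding x_eq sum_quadratic_k_sin_closed ..
  finally show ?thesis
    using h pi_bounds sin_gt_zero[of h] by (simp add: mult_less_cancel_left_pos)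
qed

lemma two_ninths_optimal:
  fixes c :: real
  assumes c: "2/9 < c"
  obtains x where "0 < x" "x < 2 * pi / 3" "2 * sin x \<le> c * sin x * (1 + 2 * cos x)^2"
proof
  define q where "q = sqrt (2 / c)"
  have q: "0 < q" "q < 3" "c * q^2 = 2"
    using c real_sqrt_less_iff[of "2 / c" 9] by (auto simp: q_def field_simps)
  define x where "x = sqrt (3 - q)"
  have x: "0 < x" "x^2 = 3 - q" using q by (simp_all add: x_def)
  have "x < 2" using q x real_sqrt_less_iff[of "3 - q" 4] by (simp add: x_def)
  then show "0 < x" "x < 2 * pi / 3" using x pi_bounds by simp_all
  have "q \<le> 1 + 2 * cos x" using cos_lower_taylor[of x] x by linarith
  then have "c * q^2 \<le> c * (1 + 2 * cos x)^2"
    using c q by (intro mult_left_mono power_mono) auto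
  moreover have "0 < sin x" using x \<open>x < 2\<close> pi_bounds by (intro sin_gt_zero) auto
  ultimately show "2 * sin x \<le> c * sin x * (1 + 2 * cos x)^2"
    using q mult_right_mono[of 2 "c * (1 + 2 * cos x)^2" "sin x"] by (simp add: mult_ac)
qed

theorem theorem5:
  shows "(\<forall>n::nat. \<forall>x::real. n \<ge> 1 \<longrightarrow> 0 < x \<longrightarrow> x < 2 * pi / 3 \<longrightarrow>
            (\<Sum>k=1..n. real ((n - k + 1) * (n - k + 2) * k) * sin (real k * x))
              > 2 / 9 * sin x * (1 + 2 * cos x) ^ 2)
       \<and> (\<forall>c::real. c > 2 / 9 \<longrightarrow>
            \<not> (\<forall>n::nat. \<forall>x::real. n \<ge> 1 \<longrightarrow> 0 < x \<longrightarrow> x < 2 * pi / 3 \<longrightarrow>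
                 (\<Sum>k=1..n. real ((n - k + 1) * (n - k + 2) * k) * sin (real k * x))
                   > c * sin x * (1 + 2 * cos x) ^ 2))"
proof -
  have "2/9 * sin x * (1 + 2 * cos x)^2
      < (\<Sum>k=1..n. real ((n - k + 1) * (n - k + 2) * k) * sin (real k * x))"
    if "1 \<le> n" "0 < x" "x < 2 * pi / 3" for n x
    unfolding sum_of_nat_weights using weighted_sine_sum_gt[OF that] .
  moreover have "\<exists>x. 0 < x \<and> x < 2 * pi / 3 \<and>
      \<not> c * sin x * (1 + 2 * cos x)^2
          < (\<Sum>k=1..1. real ((1 - k + 1) * (1 - k + 2) * k) * sin (real k * x))"
    if "2/9 < c" for c
    using two_ninths_optimal[OF that] by (auto simp: not_less)
  ultimately show ?thesis by (meson order_refl)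
qed

end
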